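(* Fix $y$ with $\phi_0(y)\neq0$. Define $\gamma_0(y)=1/\phi_0(y)$ and, recursively for $n\ge1$, $$\gamma_n(y)=-\frac{1}{\phi_0(y)}\sum_{j=1}^{n}\binom{n}{j}\phi_j(y)\,\gamma_{n-j}(y).$$ Then, for every $x$, $${}_G\lambda_0^{R}(x,y)=\frac{1}{\gamma_0(y)}\,\Gamma(R+I)\,\Gamma(2R+I)^{-1}.$$ Moreover, for every $n\ge1$, $${}_G\lambda_n^{R}(x,y)=\frac{(-1)^n}{\gamma_0(y)^{n+1}}\det M_n,$$ where $M_n$ is the $(n+1)\times(n+1)$ array with rows indexed $i=0,\dots,n$ and columns indexed $k=0,\dots,n$, as follows: - Row $0$ is $\big(\lambda_0^R(x),\lambda_1^R(x),\dots,\lambda_n^R(x)\big)$, where $\lambda_0^R(x)=\Gamma(R+I)\Gamma(2R+I)^{-1}$. - For $1\le i\le n$, the entries of row $i$ are $$(M_n)_{i,k}=\binom{k}{i-1}\gamma_{k-i+1}(y)\ \text{ if } k\ge i-1,\qquad (M_n)_{i,k}=0\ \text{ otherwise}.$$ For example, row $1$ is $(\gamma_0,\gamma_1,\dots,\gamma_n)$, row $2$ is $(0,\gamma_0,2\gamma_1,\dots,\binom{n}{1}\gamma_{n-1})$, and the last row is $(0,\dots,0,\gamma_0,\binom{n}{1}\gamma_1)$. Only row $0$ has matrix entries, so $\det M_n$ is understood as the Laplace expansion along row $0$: $$\det M_n=\sum_{k=0}^n(-1)^k\lambda_k^R(x)\,\det M_n^{(0,k)},$$ where $M_n^{(0,k)}$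 is the scalar minor obtained by deleting row $0$ and column $k$.
   Context: Let $N\ge 1$ and let $R\in\mathbb{C}^{N\times N}$ be positive stable, i.e. every eigenvalue of $R$ has positive real part. $I$ denotes the $N\times N$ identity matrix, and $\Gamma$ of a matrix is defined by the holomorphic functional calculus. For such $R$ and every integer $j\ge0$ the matrix $\Gamma(2R+(2j+1)I)$ is invertible. Put $$c_j(R)=\Gamma(R+(j+1)I)\,\Gamma(2R+(2j+1)I)^{-1}\qquad (j\ge 0).$$ The one-variable $\lambda$-matrix polynomials are $$\lambda_n^R(x)=\sum_{j=0}^n\binom{n}{j}(-1)^j c_j(R)\,x^{n-j}.$$ Let $(\phi_n(y))_{n\ge0}$ be a sequence of complex-valued functions of a variable $y$. The 2-variable general-$\lambda$-matrix polynomials are defined by $${}_G\lambda_n^R(x,y)=\sum_{\substack{a,b,c\ge0\\ a+b+c=n}}\frac{n!}{a!\,b!\,c!}\,x^a\,\phi_b(y)\,(-1)^c\,c_c(R).$$ *)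

theory Defs
  imports "HOL-Complex_Analysis.Complex_Analysis"
begin

definition mat_spectrum :: "complex^'n^'n \<Rightarrow> complex set" where
  "mat_spectrum A = {z. \<exists>v. v \<noteq> 0 \<and> A *v v = z *s v}"

definition positive_stable :: "complex^'n^'n \<Rightarrow> bool" where
  "positive_stable A \<longleftrightarrow> (\<forall>z\<in>mat_spectrum A. 0 < Re z)"

text \<open>The circle is chosen by Hilbert choice;
  by Cauchy's theorem the value does not depend on the choice.\<close>

definition hfc_circle ::
  "(complex \<Rightarrow> complex) \<Rightarrow> complex^'n^'n \<Rightarrow> complex \<Rightarrow> real \<Rightarrow> complex^'n^'n" where
  "hfc_circle f A c r =
     (\<chi> i j. contour_integral (circlepath c r)
                (\<lambda>z. f z * (matrix_inv (mat z - A)) $ i $ j) / (2 * of_real pi * \<i>))"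

definition mat_fun :: "(complex \<Rightarrow> complex) \<Rightarrow> complex^'n^'n \<Rightarrow> complex^'n^'n" where
  "mat_fun f A =
     (let (c, r) = (SOME (c, r). 0 < r \<and> mat_spectrum A \<subseteq> ball c r \<and> f holomorphic_on cball c r)
      in hfc_circle f A c r)"

definition mat_Gamma :: "complex^'n^'n \<Rightarrow> complex^'n^'n" where
  "mat_Gamma A = mat_fun Gamma A"

definition cR :: "complex^'n^'n \<Rightarrow> nat \<Rightarrow> complex^'n^'n" where
  "cR R j = mat_Gamma (R + mat (of_nat (j + 1)))
            ** matrix_inv (mat_Gamma (2 *\<^sub>R R + mat (of_nat (2 * j + 1))))"

definition lambdaR :: "complex^'n^'n \<Rightarrow> nat \<Rightarrow> complex \<Rightarrow> complex^'n^'n" where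
  "lambdaR R n x = (\<Sum>j\<le>n. mat (of_nat (n choose j) * (-1) ^ j * x ^ (n - j)) ** cR R j)"

definition G_lambda ::
  "(nat \<Rightarrow> 'b \<Rightarrow> complex) \<Rightarrow> complex^'n^'n \<Rightarrow> nat \<Rightarrow> complex \<Rightarrow> 'b \<Rightarrow> complex^'n^'n" where
  "G_lambda \<phi> R n x y =
     (\<Sum>(a, b, c) \<in> {(a, b, c). a + b + c = n}.
        mat (fact n / (fact a * fact b * fact c) * x ^ a * \<phi> b y * (-1) ^ c) ** cR R c)"

fun gam :: "(nat \<Rightarrow> 'b \<Rightarrow> complex) \<Rightarrow> 'b \<Rightarrow> nat \<Rightarrow> complex" where
  "gam \<phi> y 0 = 1 / \<phi> 0 y"
| "gam \<phi> y (Suc n) =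
     - (1 / \<phi> 0 y) * (\<Sum>j\<in>{1..Suc n}. of_nat (Suc n choose j) * \<phi> j y * gam \<phi> y (Suc n - j))"

definition detn :: "nat \<Rightarrow> (nat \<Rightarrow> nat \<Rightarrow> complex) \<Rightarrow> complex" where
  "detn n A = (\<Sum>p | p permutes {..<n}. of_int (sign p) * (\<Prod>i<n. A i (p i)))"

text \<open>Scalar rows i = 1..n of M_n (rows/columns indexed from 0).\<close>
definition Mrow :: "(nat \<Rightarrow> complex) \<Rightarrow> nat \<Rightarrow> nat \<Rightarrow> complex" where
  "Mrow g i k = (if i - 1 \<le> k then of_nat (k choose (i - 1)) * g (k - (i - 1)) else 0)"

text \<open>Minor of M_n obtained by deleting row 0 and column k, as an n x n array.\<close>
definition Mminor :: "(nat \<Rightarrow> complex) \<Rightarrow> nat \<Rightarrow> nat \<Rightarrow> nat \<Rightarrow> complex" where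
  "Mminor g k i' k' = Mrow g (Suc i') (if k' < k then k' else Suc k')"

end

theory Submission imports Defs "Jordan_Normal_Form.Determinant" begin

text \<open>Expanding the trinomial coefficients gives
  \<open>G_lambda n = (\<Sum>k\<le>n. (n choose k) \<phi>\<^sub>n\<^sub>-\<^sub>k \<lambda>\<^sub>k)\<close>, so only the
  coefficients have to be identified. Rows \<open>1..n\<close> of \<open>M\<^sub>n\<close> form an upper-triangular
  \<open>n \<times> (n+1)\<close> array, and the recursion defining \<open>\<gamma>\<close> says precisely that the vector
  \<open>v\<^sub>l = (n choose l) \<phi>\<^sub>n\<^sub>-\<^sub>l\<close> lies in its kernel. By Cramer's rule the signed maximal
  minors of an array with such a kernel vector are proportional to it; the minor without the
  last column is triangular with determinant \<open>\<gamma>\<^sub>0\<^sup>n\<close>, which fixes the constant.\<close>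

lemma detn_eq_det: "detn n f = Determinant.det (Matrix.mat n n (\<lambda>(i, j). f i j))"
  unfolding detn_def
  by (subst det_def'[of _ n]) (auto intro!: sum.cong prod.cong simp: atLeast0LessThan permutes_def)

definition rotate_to_last :: "nat \<Rightarrow> nat \<Rightarrow> nat \<Rightarrow> nat" where
  "rotate_to_last n k j = (if j < k then j else if j < n - 1 then Suc j else k)"

lemma rotate_to_last_bij:
  assumes "k < n"
  shows "bij_betw (rotate_to_last n k) {..<n} {..<n}"
proof -
  have "rotate_to_last n k ` {..<n} \<subseteq> {..<n}"
    using assms by (auto simp: rotate_to_last_def)
  moreover have "inj_on (rotate_to_last n k) {..<n}"
    using assms by (auto simp: inj_on_def rotate_to_last_def split: if_splits)
  ultimately show ?thesis
    by (simp add: bij_betw_def endo_inj_surj)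
qed

lemma det_rotate_to_last:
  fixes f :: "nat \<Rightarrow> nat \<Rightarrow> 'a::comm_ring_1"
  assumes "k < n"
  shows "Determinant.det (Matrix.mat n n (\<lambda>(i, j). f i (rotate_to_last n k j)))
       = (-1) ^ (n - 1 - k) * Determinant.det (Matrix.mat n n (\<lambda>(i, j). f i j))"
proof -
  from assms have "k \<le> n - 1" by simp
  then show ?thesis
  proof (induction k rule: inc_induct)
    case base
    have "Matrix.mat n n (\<lambda>(i, j). f i (rotate_to_last n (n - 1) j)) = Matrix.mat n n (\<lambda>(i, j). f i j)"
      by (rule eq_matI) (auto simp: rotate_to_last_def intro!: arg_cong[where f = "f _"])
    then show ?case by simp
  next
    case (step k)
    have "Matrix.mat n n (\<lambda>(i, j). f i (rotate_to_last n k j))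
        = swapcols k (n - 1) (Matrix.mat n n (\<lambda>(i, j). f i (rotate_to_last n (Suc k) j)))"
      using step.hyps by (intro eq_matI) (auto simp: mat_swapcols_def rotate_to_last_def)
    moreover have "Determinant.det (swapcols k (n - 1) M) = - Determinant.det M"
      if "M \<in> carrier_mat n n" for M :: "'a Matrix.mat"
      using step.hyps that by (intro det_swapcols) auto
    moreover have "n - 1 - k = Suc (n - 1 - Suc k)"
      using step.hyps by simp
    ultimately show ?case
      using step.IH by simp
  qed
qed

lemma detn_delete_col_kernel:
  fixes B :: "nat \<Rightarrow> nat \<Rightarrow> complex" and v :: "nat \<Rightarrow> complex"
  assumes k: "k \<le> n" and vn: "v n \<noteq> 0"
    and kernel: "\<And>i. i < n \<Longrightarrow> (\<Sum>l\<le>n. B i l * v l) = 0"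
  shows "v n * detn n (\<lambda>i j. B i (if j < k then j else Suc j)) = (-1) ^ (n - k) * v k * detn n B"
proof (cases "k = n")
  case True
  have "detn n (\<lambda>i j. B i (if j < n then j else Suc j)) = detn n B"
    unfolding detn_def by (auto intro!: sum.cong prod.cong) (metis lessThan_iff permutes_in_image)
  with True show ?thesis by simp
next
  case False
  with k have kn: "k < n" by simp
  \<comment> \<open>Column \<open>n\<close> is a combination of columns \<open>0..n-1\<close>; rotating column \<open>k\<close> to the
    end and then replacing it by column \<open>n\<close> yields the minor, so Cramer's rule applies.\<close>
  define u where "u l = - v l / v n" for l
  have last_col: "B i n = (\<Sum>l<n. B i l * u l)" if "i < n" for i
  proof -
    have "(\<Sum>l<n. B i l * v l) + B i n * v n = 0"
      using kernel[OF that] by (simp add: lessThan_Suc_atMost[symmetric])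
    moreover have "(\<Sum>l<n. B i l * u l) = - (\<Sum>l<n. B i l * v l) / v n"
      by (simp add: u_def sum_divide_distrib sum_negf[symmetric])
    ultimately show ?thesis
      using vn by (simp add: eq_neg_iff_add_eq_0[symmetric])
  qed
  define A where "A = Matrix.mat n n (\<lambda>(i, j). B i (rotate_to_last n k j))"
  define x where "x = Matrix.vec n (\<lambda>j. u (rotate_to_last n k j))"
  have A: "A \<in> carrier_mat n n" and x: "x \<in> carrier_vec n"
    by (simp_all add: A_def x_def)
  have Ax: "vec_index (A *\<^sub>v x) i = B i n" if "i < n" for i
  proof -
    have "vec_index (A *\<^sub>v x) i = (\<Sum>j<n. B i (rotate_to_last n k j) * u (rotate_to_last n k j))"
      using that by (auto simp: A_def x_def scalar_prod_def atLeast0LessThan intro!: sum.cong)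
    also have "\<dots> = (\<Sum>l<n. B i l * u l)"
      using sum.reindex_bij_betw[OF rotate_to_last_bij[OF kn], of "\<lambda>l. B i l * u l"] by simp
    finally show ?thesis
      using last_col[OF that] by simp
  qed
  have "Matrix.mat n n (\<lambda>(i, j). B i (if j < k then j else Suc j)) = replace_col A (A *\<^sub>v x) (n - 1)"
    using kn A by (intro eq_matI) (auto simp: replace_col_def Ax simp del: index_mult_mat_vec,
        auto simp: A_def rotate_to_last_def)
  then have "detn n (\<lambda>i j. B i (if j < k then j else Suc j)) = vec_index x (n - 1) * Determinant.det A"
    using kn by (simp add: detn_eq_det cramer_lemma_mat[OF A x])
  also have "vec_index x (n - 1) = u k"
    using kn by (auto simp: x_def rotate_to_last_def)
  also have "Determinant.det A = (-1) ^ (n - 1 - k) * detn n B"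
    unfolding A_def detn_eq_det by (rule det_rotate_to_last[OF kn])
  finally have "v n * detn n (\<lambda>i j. B i (if j < k then j else Suc j))
      = - ((-1) ^ (n - 1 - k) * v k * detn n B)"
    using vn by (simp add: u_def field_simps)
  moreover have "(-1::complex) ^ (n - k) = - ((-1) ^ (n - 1 - k))"
    using kn by (simp add: Suc_diff_Suc[symmetric])
  ultimately show ?thesis by simp
qed

lemma gam_binomial_convolution:
  assumes "\<phi> 0 y \<noteq> 0" and "1 \<le> N"
  shows "(\<Sum>m\<le>N. of_nat (N choose m) * gam \<phi> y m * \<phi> (N - m) y) = 0"
proof -
  obtain M where N: "N = Suc M"
    using assms(2) by (cases N) auto
  have "(\<Sum>j\<le>N. of_nat (N choose j) * \<phi> j y * gam \<phi> y (N - j))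
      = \<phi> 0 y * gam \<phi> y N + (\<Sum>j\<in>{1..N}. of_nat (N choose j) * \<phi> j y * gam \<phi> y (N - j))"
    by (simp add: atMost_atLeast0 sum.atLeast_Suc_atMost)
  also have "\<dots> = 0"
    using assms(1) by (simp add: N field_simps)
  finally have "(\<Sum>j\<le>N. of_nat (N choose j) * \<phi> j y * gam \<phi> y (N - j)) = 0" .
  moreover have "(\<Sum>m\<le>N. of_nat (N choose m) * gam \<phi> y m * \<phi> (N - m) y)
      = (\<Sum>j\<le>N. of_nat (N choose j) * \<phi> j y * gam \<phi> y (N - j))"
    by (rule sum.reindex_bij_witness[where i = "\<lambda>j. N - j" and j = "\<lambda>m. N - m"])
      (auto simp: binomial_symmetric[symmetric])
  ultimately show ?thesis by simp
qed

lemma Mrow_gam_kernel: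
  assumes "\<phi> 0 y \<noteq> 0" and "i < n"
  shows "(\<Sum>l\<le>n. Mrow (gam \<phi> y) (Suc i) l * (of_nat (n choose l) * \<phi> (n - l) y)) = 0"
proof -
  let ?g = "gam \<phi> y"
  have "(\<Sum>l\<le>n. Mrow ?g (Suc i) l * (of_nat (n choose l) * \<phi> (n - l) y))
      = (\<Sum>l\<in>{i..n}. of_nat (n choose i)
           * (of_nat ((n - i) choose (l - i)) * ?g (l - i) * \<phi> (n - i - (l - i)) y))"
  proof (rule sum.mono_neutral_cong_right)
    fix l assume l: "l \<in> {i..n}"
    then have "(n choose l) * (l choose i) = (n choose i) * ((n - i) choose (l - i))"
      by (intro choose_mult) auto
    then have "of_nat (n choose l) * of_nat (l choose i)
        = (of_nat (n choose i) * of_nat ((n - i) choose (l - i)) :: complex)"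
      by (metis of_nat_mult)
    moreover have "n - l = n - i - (l - i)"
      using l by auto
    ultimately show "Mrow ?g (Suc i) l * (of_nat (n choose l) * \<phi> (n - l) y)
        = of_nat (n choose i) * (of_nat ((n - i) choose (l - i)) * ?g (l - i) * \<phi> (n - i - (l - i)) y)"
      using l by (simp add: Mrow_def algebra_simps)
  qed (auto simp: Mrow_def)
  also have "\<dots> = of_nat (n choose i)
      * (\<Sum>m\<le>n - i. of_nat ((n - i) choose m) * ?g m * \<phi> (n - i - m) y)"
    using assms(2) by (simp add: sum_distrib_left atMost_atLeast0 sum.atLeastAtMost_shift_0[of i n])
  also have "\<dots> = 0"
    using gam_binomial_convolution[of \<phi> y "n - i"] assms by simp
  finally show ?thesis .
qed

lemma detn_Mrow: "detn n (\<lambda>i. Mrow g (Suc i)) = g 0 ^ n"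
proof -
  let ?T = "Matrix.mat n n (\<lambda>(i, j). Mrow g (Suc i) j)"
  have "Determinant.det ?T = prod_list (diag_mat ?T)"
    by (rule det_upper_triangular) (auto simp: upper_triangular_def Mrow_def)
  also have "diag_mat ?T = replicate n (g 0)"
    by (rule nth_equalityI) (auto simp: diag_mat_def Mrow_def)
  finally show ?thesis
    by (simp add: detn_eq_det)
qed

lemma Mminor_gam_coefficient:
  assumes "\<phi> 0 y \<noteq> 0" and "k \<le> n"
  shows "(-1) ^ n / gam \<phi> y 0 ^ (n + 1) * ((-1) ^ k * detn n (Mminor (gam \<phi> y) k))
       = of_nat (n choose k) * \<phi> (n - k) y"
proof -
  let ?g = "gam \<phi> y"
  let ?v = "\<lambda>l. of_nat (n choose l) * \<phi> (n - l) y"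
  have "Mminor ?g k = (\<lambda>i j. Mrow ?g (Suc i) (if j < k then j else Suc j))"
    by (simp add: fun_eq_iff Mminor_def)
  then have "\<phi> 0 y * detn n (Mminor ?g k) = (-1) ^ (n - k) * ?v k * detn n (\<lambda>i. Mrow ?g (Suc i))"
    using detn_delete_col_kernel[of k n ?v "\<lambda>i. Mrow ?g (Suc i)"] Mrow_gam_kernel[of \<phi> y] assms
    by simp
  then have minor: "\<phi> 0 y * detn n (Mminor ?g k) = (-1) ^ (n - k) * ?v k * ?g 0 ^ n"
    by (simp only: detn_Mrow)
  have sign: "(-1::complex) ^ n * (-1) ^ k * (-1) ^ (n - k) = 1"
    using assms(2) by (simp add: power_add[symmetric])
  have "(-1) ^ n / ?g 0 ^ (n + 1) * ((-1) ^ k * detn n (Mminor ?g k))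
      = (-1) ^ n * (-1) ^ k * \<phi> 0 y ^ n * (\<phi> 0 y * detn n (Mminor ?g k))"
    by (simp add: power_one_over)
  also have "\<dots> = ((-1) ^ n * (-1) ^ k * (-1) ^ (n - k)) * ?v k * (\<phi> 0 y * ?g 0) ^ n"
    unfolding minor by (simp add: power_mult_distrib ac_simps del: gam.simps)
  also have "\<dots> = ?v k"
    using sign assms(1) by simp
  finally show ?thesis .
qed

hide_const (open) Matrix.mat Determinant.det Matrix.row Matrix.col Matrix.vec Matrix.transpose_mat
no_notation Matrix.vec_index (infixl \<open>$\<close> 100)
no_notation fps_nth (infixl \<open>$\<close> 75)

lemma mat_mult_nth: "(mat a ** A) $ r $ s = a * A $ r $ s"
  for A :: "'a::semiring_1^'n^'m"
proof -
  have "(mat a ** A) $ r $ s = (\<Sum>k\<in>UNIV. (if r = k then a else 0) * A $ k $ s)"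
    by (simp add: matrix_matrix_mult_def Finite_Cartesian_Product.mat_def)
  also have "\<dots> = (\<Sum>k\<in>UNIV. if r = k then a * A $ k $ s else 0)"
    by (rule sum.cong) auto
  finally show ?thesis
    by simp
qed

lemma mat_mult_sum_mat:
  "mat c ** (\<Sum>k\<in>K. mat (d k) ** M k) = (\<Sum>k\<in>K. mat (c * d k) ** M k)"
  for M :: "'k \<Rightarrow> 'a::semiring_1^'n^'m"
  by (simp add: Finite_Cartesian_Product.vec_eq_iff mat_mult_nth sum_distrib_left mult.assoc)

lemma G_lambda_eq_binomial_sum:
  "G_lambda \<phi> R n x y = (\<Sum>k\<le>n. mat (of_nat (n choose k) * \<phi> (n - k) y) ** lambdaR R k x)"
proof (simp only: Finite_Cartesian_Product.vec_eq_iff, intro allI)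
  fix r s
  let ?c = "\<lambda>j. cR R j $ r $ s"
  have "G_lambda \<phi> R n x y $ r $ s
      = (\<Sum>(a, b, c) \<in> {(a, b, c). a + b + c = n}.
           fact n / (fact a * fact b * fact c) * x ^ a * \<phi> b y * (-1) ^ c * ?c c)"
    by (simp add: G_lambda_def mat_mult_nth case_prod_unfold)
  also have "\<dots> = (\<Sum>(k, j) \<in> Sigma {..n} (\<lambda>k. {..k}).
      of_nat (n choose k) * \<phi> (n - k) y * (of_nat (k choose j) * (-1) ^ j * x ^ (k - j) * ?c j))"
  proof (rule sum.reindex_bij_witness[where j = "\<lambda>(a, b, c). (a + c, c)" and i = "\<lambda>(k, j). (k - j, n - k, j)"])
    fix t assume "t \<in> {(a, b, c). a + b + c = n}"
    then obtain a b c where t: "t = (a, b, c)" and abc: "a + b + c = n"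
      by auto
    then have "n - (a + c) = b" "a + c - c = a"
      by auto
    moreover have "(fact n / (fact a * fact b * fact c) :: complex)
        = of_nat (n choose (a + c)) * of_nat ((a + c) choose c)"
      using abc by (simp add: binomial_fact calculation field_simps)
    ultimately show "(case (case t of (a, b, c) \<Rightarrow> (a + c, c)) of (k, j) \<Rightarrow>
          of_nat (n choose k) * \<phi> (n - k) y * (of_nat (k choose j) * (-1) ^ j * x ^ (k - j) * ?c j))
        = (case t of (a, b, c) \<Rightarrow> fact n / (fact a * fact b * fact c) * x ^ a * \<phi> b y * (-1) ^ c * ?c c)"
      by (simp add: t field_simps)
  qed auto
  also have "\<dots> = (\<Sum>k\<le>n. mat (of_nat (n choose k) * \<phi> (n - k) y) ** lambdaR R k x) $ r $ s"
    by (simp add: sum.Sigma[symmetric] lambdaR_def mat_mult_nth sum_distrib_left)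
  finally show "G_lambda \<phi> R n x y $ r $ s
      = (\<Sum>k\<le>n. mat (of_nat (n choose k) * \<phi> (n - k) y) ** lambdaR R k x) $ r $ s" .
qed

theorem theorem3p2:
  fixes R :: "complex^'n^'n" and \<phi> :: "nat \<Rightarrow> 'b \<Rightarrow> complex" and y :: 'b
  assumes "positive_stable R"
    and "\<phi> 0 y \<noteq> 0"
  shows "(\<forall>x. G_lambda \<phi> R 0 x y
              = mat (1 / gam \<phi> y 0) ** (mat_Gamma (R + mat 1) ** matrix_inv (mat_Gamma (2 *\<^sub>R R + mat 1))))
       \<and> (\<forall>n\<ge>1. \<forall>x. G_lambda \<phi> R n x y
              = mat ((-1) ^ n / gam \<phi> y 0 ^ (n + 1))
                ** (\<Sum>k\<le>n. mat ((-1) ^ k * detn n (Mminor (gam \<phi> y) k)) ** lambdaR R k x))"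
proof (intro conjI allI impI)
  fix x
  show "G_lambda \<phi> R 0 x y
      = mat (1 / gam \<phi> y 0) ** (mat_Gamma (R + mat 1) ** matrix_inv (mat_Gamma (2 *\<^sub>R R + mat 1)))"
    by (simp add: G_lambda_eq_binomial_sum lambdaR_def cR_def)
next
  fix n :: nat and x
  have "G_lambda \<phi> R n x y = (\<Sum>k\<le>n. mat (of_nat (n choose k) * \<phi> (n - k) y) ** lambdaR R k x)"
    by (rule G_lambda_eq_binomial_sum)
  also have "\<dots> = (\<Sum>k\<le>n. mat ((-1) ^ n / gam \<phi> y 0 ^ (n + 1)
      * ((-1) ^ k * detn n (Mminor (gam \<phi> y) k))) ** lambdaR R k x)"
    using Mminor_gam_coefficient[of \<phi> y] assms(2) by simp
  also have "\<dots> = mat ((-1) ^ n / gam \<phi> y 0 ^ (n + 1))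
      ** (\<Sum>k\<le>n. mat ((-1) ^ k * detn n (Mminor (gam \<phi> y) k)) ** lambdaR R k x)"
    by (rule mat_mult_sum_mat[symmetric])
  finally show "G_lambda \<phi> R n x y = mat ((-1) ^ n / gam \<phi> y 0 ^ (n + 1))
      ** (\<Sum>k\<le>n. mat ((-1) ^ k * detn n (Mminor (gam \<phi> y) k)) ** lambdaR R k x)" .
qed

end
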